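(* Let $L\ge 2$, let $\Omega\subsetneq\mathbb{Z}_L$ with $|\Omega|=n$, and let $\mathcal{C}=\{C_0,\dots,C_{M-1}\}$ be a set of $M$ complex sequences of length $L$ such that every $C_j$ satisfies the spectral constraint: its frequency-domain dual $\widehat{C}_j=(\hat c_{j,0},\dots,\hat c_{j,L-1})$ satisfies $|\hat c_{j,k}|^2=\frac{L}{L-n}$ for $k\notin\Omega$ and $\hat c_{j,k}=0$ for $k\in\Omega$. Define $\theta_a=\max\{|\theta_{C_i}(\tau)|:0\le i<M,\ 0<\tau<L\}$ and, when $M\ge 2$, $\theta_c=\max\{|\theta_{C_i,C_j}(\tau)|:0\le i\ne j<M,\ 0\le\tau<L\}$. Then $$\theta_a\ge L\sqrt{\frac{n}{(L-n)(L-1)}},\qquad \theta_c\ge \frac{L}{\sqrt{L-n}}.$$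
   Context: $\omega_L=e^{2\pi\sqrt{-1}/L}$. For a length-$L$ sequence $C=(c_0,\dots,c_{L-1})$ its frequency-domain dual is $\widehat C=(\hat c_0,\dots,\hat c_{L-1})$ with $\hat c_k=\frac{1}{\sqrt L}\sum_{t=0}^{L-1}c_t\omega_L^{-tk}$. The periodic cross-correlation of length-$L$ sequences $C,D$ is $\theta_{C,D}(\tau)=\sum_{t=0}^{L-1}c_t d^*_{\langle t+\tau\rangle_L}$, where $\langle\cdot\rangle_L$ is reduction mod $L$ and $^*$ is complex conjugation; $\theta_C=\theta_{C,C}$. *)

theory Defs
  imports Complex_Main
begin

text \<open>Sequences of length L are functions nat \<Rightarrow> complex; only indices 0..L-1 matter.\<close>

definition omega :: "nat \<Rightarrow> complex" where
  "omega L = exp (2 * of_real pi * \<i> / of_nat L)"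

definition dual :: "nat \<Rightarrow> (nat \<Rightarrow> complex) \<Rightarrow> nat \<Rightarrow> complex" where
  "dual L c k = (1 / of_real (sqrt (real L))) *
      (\<Sum>t<L. c t * inverse (omega L ^ (t * k)))"

definition pcorr :: "nat \<Rightarrow> (nat \<Rightarrow> complex) \<Rightarrow> (nat \<Rightarrow> complex) \<Rightarrow> nat \<Rightarrow> complex" where
  "pcorr L c d \<tau> = (\<Sum>t<L. c t * cnj (d ((t + \<tau>) mod L)))"

definition theta_a :: "nat \<Rightarrow> nat \<Rightarrow> (nat \<Rightarrow> nat \<Rightarrow> complex) \<Rightarrow> real" where
  "theta_a L M C = Max {cmod (pcorr L (C i) (C i) \<tau>) | i \<tau>. i < M \<and> 0 < \<tau> \<and> \<tau> < L}"

definition theta_c :: "nat \<Rightarrow> nat \<Rightarrow> (nat \<Rightarrow> nat \<Rightarrow> complex) \<Rightarrow> real" where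
  "theta_c L M C = Max {cmod (pcorr L (C i) (C j) \<tau>) | i j \<tau>. i < M \<and> j < M \<and> i \<noteq> j \<and> \<tau> < L}"

text \<open>Sequence truncated to its length-L support (to compare sequences as length-L objects).\<close>
definition seq_trunc :: "nat \<Rightarrow> (nat \<Rightarrow> complex) \<Rightarrow> nat \<Rightarrow> complex" where
  "seq_trunc L c t = (if t < L then c t else 0)"

definition spectral_constraint :: "nat \<Rightarrow> nat set \<Rightarrow> (nat \<Rightarrow> complex) \<Rightarrow> bool" where
  "spectral_constraint L \<Omega> c \<longleftrightarrow>
     (\<forall>k<L. (k \<in> \<Omega> \<longrightarrow> dual L c k = 0) \<and>
            (k \<notin> \<Omega> \<longrightarrow> (cmod (dual L c k))^2 = real L / (real L - real (card \<Omega>))))"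

end

theory Submission
  imports Defs "HOL-Library.Real_Mod"
begin

text \<open>The correlation of \<open>C\<close> and \<open>D\<close> is the inverse DFT of \<open>\<hat>c\<^sub>k * cnj \<hat>d\<^sub>k\<close>, so by
  Parseval \<open>\<Sum>\<^sub>\<tau> |\<theta>\<^sub>C\<^sub>,\<^sub>D(\<tau>)|\<^sup>2 = L * \<Sum>\<^sub>k |\<hat>c\<^sub>k|\<^sup>2 * |\<hat>d\<^sub>k|\<^sup>2\<close>, which is \<open>L^3 / (L - n)\<close>
  for any two sequences satisfying the spectral constraint, while the in-phase value
  \<open>\<theta>\<^sub>C(0) = \<Sum>\<^sub>k |\<hat>c\<^sub>k|\<^sup>2\<close> is \<open>L\<close>. Bounding the \<open>L - 1\<close> out-of-phase terms by
  \<open>\<theta>\<^sub>a\<^sup>2\<close>, respectively all \<open>L\<close> terms by \<open>\<theta>\<^sub>c\<^sup>2\<close>, gives the two bounds.\<close>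

definition root_unity :: "nat \<Rightarrow> int \<Rightarrow> complex" where
  "root_unity L m = cis (2 * pi * of_int m / real L)"

lemma root_unity_add: "root_unity L (a + b) = root_unity L a * root_unity L b"
  unfolding root_unity_def by (simp add: cis_mult add_divide_distrib distrib_left)

lemma root_unity_cnj: "cnj (root_unity L m) = root_unity L (- m)"
  unfolding root_unity_def by (simp add: cis_cnj)

lemma root_unity_power: "root_unity L m ^ k = root_unity L (int k * m)"
  unfolding root_unity_def by (simp add: DeMoivre mult_ac)

lemma root_unity_eq_1_iff:
  assumes "L > 0"
  shows "root_unity L m = 1 \<longleftrightarrow> int L dvd m"
proof -
  have "root_unity L m = 1 \<longleftrightarrow> (\<exists>q. real_of_int m = of_int q * real L)"
    using assms by (simp add: root_unity_def cis_eq_1_iff field_simps)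
  also have "\<dots> \<longleftrightarrow> (\<exists>q. m = q * int L)"
    by (metis of_int_eq_iff of_int_mult of_int_of_nat_eq)
  finally show ?thesis by (auto simp: dvd_def mult.commute)
qed

lemma sum_root_unity:
  assumes "L > 0"
  shows "(\<Sum>k<L. root_unity L (int k * m)) = (if int L dvd m then of_nat L else 0)"
proof -
  have "root_unity L m ^ L = 1"
    using assms by (simp add: root_unity_power root_unity_eq_1_iff)
  then show ?thesis
    using assms by (simp add: root_unity_power[symmetric] root_unity_eq_1_iff sum_gp_strict)
qed

lemma sum_root_unity_diff:
  assumes "L > 0" and "s < L"
  shows "(\<Sum>k<L. root_unity L (int k * (int s - int u))) = (if s = u mod L then of_nat L else 0)"
proof -
  have "int L dvd (int s - int u) \<longleftrightarrow> int s mod int L = int u mod int L"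
    by (simp add: mod_eq_dvd_iff)
  also have "\<dots> \<longleftrightarrow> s = u mod L"
    using assms(2) by (metis mod_less of_nat_eq_iff zmod_int)
  finally show ?thesis using sum_root_unity[OF assms(1)] by simp
qed

lemma sum_swap3:
  "(\<Sum>i\<in>A. \<Sum>j\<in>B. \<Sum>k\<in>C. f i j k) = (\<Sum>j\<in>B. \<Sum>k\<in>C. \<Sum>i\<in>A. f i j k)"
  by (subst sum.swap) (rule sum.cong[OF refl], rule sum.swap)

lemma inverse_omega_power: "inverse (omega L ^ j) = root_unity L (- int j)"
proof -
  have "omega L = cis (2 * pi / real L)"
    by (simp add: omega_def cis_conv_exp mult_ac)
  then show ?thesis by (simp add: root_unity_def DeMoivre mult_ac)
qed

lemma dual_eq_sum_root_unity:
  "dual L c k = (\<Sum>t<L. c t * root_unity L (- (int t * int k))) / sqrt (real L)"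
  by (simp add: dual_def inverse_omega_power sum_divide_distrib)

lemma dual_mult_cnj_dual:
  assumes "L > 0"
  shows "dual L c k * cnj (dual L d k) * root_unity L (- int \<tau> * int k) =
    (\<Sum>t<L. \<Sum>s<L. c t * cnj (d s) * root_unity L (int k * (int s - int (t + \<tau>)))) / of_nat L"
proof -
  have sqrt_sq: "complex_of_real (sqrt (real L)) * complex_of_real (sqrt (real L)) = of_nat L"
    by (simp flip: of_real_mult)
  have phase: "root_unity L (- (int t * int k)) * root_unity L (int s * int k) * root_unity L (- int \<tau> * int k)
      = root_unity L (int k * (int s - int (t + \<tau>)))" for s t
    by (simp flip: root_unity_add add: algebra_simps)
  have "dual L c k * cnj (dual L d k) * root_unity L (- int \<tau> * int k) =
      (\<Sum>t<L. c t * root_unity L (- (int t * int k))) * (\<Sum>s<L. cnj (d s) * root_unity L (int s * int k))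
        * root_unity L (- int \<tau> * int k) / of_nat L"
    by (simp add: dual_eq_sum_root_unity root_unity_cnj cnj_sum flip: sqrt_sq)
  also have "\<dots> = (\<Sum>t<L. \<Sum>s<L. c t * cnj (d s) * (root_unity L (- (int t * int k)) * root_unity L (int s * int k)
        * root_unity L (- int \<tau> * int k))) / of_nat L"
    unfolding sum_product sum_distrib_right
    by (rule arg_cong[where f = "\<lambda>x. x / of_nat L"], intro sum.cong refl) (simp add: sum_distrib_left ac_simps)
  finally show ?thesis by (simp only: phase)
qed

lemma pcorr_eq_sum_dual:
  assumes "L > 0"
  shows "pcorr L c d \<tau> = (\<Sum>k<L. dual L c k * cnj (dual L d k) * root_unity L (- int \<tau> * int k))"
proof -
  have "(\<Sum>k<L. dual L c k * cnj (dual L d k) * root_unity L (- int \<tau> * int k)) =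
      (\<Sum>k<L. \<Sum>t<L. \<Sum>s<L. c t * cnj (d s) * root_unity L (int k * (int s - int (t + \<tau>)))) / of_nat L"
    unfolding dual_mult_cnj_dual[OF assms] by (simp only: sum_divide_distrib)
  also have "\<dots> =
      (\<Sum>t<L. \<Sum>s<L. \<Sum>k<L. c t * cnj (d s) * root_unity L (int k * (int s - int (t + \<tau>)))) / of_nat L"
    by (subst sum_swap3) (rule refl)
  also have "\<dots> =
      (\<Sum>t<L. \<Sum>s<L. c t * cnj (d s) * (\<Sum>k<L. root_unity L (int k * (int s - int (t + \<tau>))))) / of_nat L"
    by (simp only: sum_distrib_left)
  also have "\<dots> = (\<Sum>t<L. \<Sum>s<L. c t * cnj (d s) * (if s = (t + \<tau>) mod L then of_nat L else 0)) / of_nat L"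
    using assms by (simp add: sum_root_unity_diff del: of_nat_add)
  also have "\<dots> = (\<Sum>t<L. c t * cnj (d ((t + \<tau>) mod L)) * of_nat L) / of_nat L"
    using assms by (simp add: if_distrib sum.delta' cong: if_cong)
  also have "\<dots> = pcorr L c d \<tau>"
    using assms by (simp add: pcorr_def flip: sum_distrib_right)
  finally show ?thesis ..
qed

lemma sum_norm_sq_sum_root_unity:
  assumes "L > 0"
  shows "(\<Sum>\<tau><L. (cmod (\<Sum>k<L. a k * root_unity L (- int \<tau> * int k)))\<^sup>2) = real L * (\<Sum>k<L. (cmod (a k))\<^sup>2)"
proof -
  have phase: "root_unity L (- int \<tau> * int k) * root_unity L (- (- int \<tau> * int k'))
      = root_unity L (int \<tau> * (int k' - int k))" for \<tau> k k'
    by (simp flip: root_unity_add add: algebra_simps)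
  have "complex_of_real (\<Sum>\<tau><L. (cmod (\<Sum>k<L. a k * root_unity L (- int \<tau> * int k)))\<^sup>2) =
      (\<Sum>\<tau><L. \<Sum>k<L. \<Sum>k'<L. a k * cnj (a k') * root_unity L (int \<tau> * (int k' - int k)))"
    unfolding of_real_sum complex_norm_square cnj_sum complex_cnj_mult root_unity_cnj sum_product
    by (intro sum.cong refl) (simp flip: phase add: ac_simps)
  also have "\<dots> = (\<Sum>k<L. \<Sum>k'<L. \<Sum>\<tau><L. a k * cnj (a k') * root_unity L (int \<tau> * (int k' - int k)))"
    by (rule sum_swap3)
  also have "\<dots> = (\<Sum>k<L. \<Sum>k'<L. a k * cnj (a k') * (if k' = k then of_nat L else 0))"
    using assms by (intro sum.cong refl) (simp add: sum_root_unity_diff flip: sum_distrib_left)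
  also have "\<dots> = (\<Sum>k<L. of_nat L * (a k * cnj (a k)))"
    by (simp add: if_distrib sum.delta mult_ac cong: if_cong)
  also have "\<dots> = complex_of_real (real L * (\<Sum>k<L. (cmod (a k))\<^sup>2))"
    unfolding of_real_mult of_real_sum complex_norm_square sum_distrib_left by simp
  finally show ?thesis by (simp only: of_real_eq_iff)
qed

lemma sum_norm_sq_pcorr:
  assumes "L > 0"
  shows "(\<Sum>\<tau><L. (cmod (pcorr L c d \<tau>))\<^sup>2) = real L * (\<Sum>k<L. (cmod (dual L c k))\<^sup>2 * (cmod (dual L d k))\<^sup>2)"
  using sum_norm_sq_sum_root_unity[OF assms, of "\<lambda>k. dual L c k * cnj (dual L d k)"]
  by (simp add: pcorr_eq_sum_dual[OF assms] norm_mult power_mult_distrib)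

lemma pcorr_self_zero:
  assumes "L > 0"
  shows "pcorr L c c 0 = complex_of_real (\<Sum>k<L. (cmod (dual L c k))\<^sup>2)"
  unfolding of_real_sum complex_norm_square by (simp add: pcorr_eq_sum_dual[OF assms] root_unity_def)

lemma sum_lessThan_if_mem_zero:
  assumes "\<Omega> \<subseteq> {..<L}"
  shows "(\<Sum>k<L. if k \<in> \<Omega> then 0 else x) = (real L - real (card \<Omega>)) * x"
proof -
  have "(\<Sum>k<L. if k \<in> \<Omega> then 0 else x) = real (card ({..<L} - \<Omega>)) * x"
    by (simp add: sum.If_cases Diff_eq)
  also have "card ({..<L} - \<Omega>) = L - card \<Omega>"
    using assms by (simp add: card_Diff_subset finite_subset)
  finally show ?thesis
    using assms card_mono[OF finite_lessThan assms] by (simp add: of_nat_diff)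
qed

lemma spectral_constraint_norm_sq_dual:
  assumes "spectral_constraint L \<Omega> c" and "k < L"
  shows "(cmod (dual L c k))\<^sup>2 = (if k \<in> \<Omega> then 0 else real L / (real L - real (card \<Omega>)))"
  using assms by (auto simp: spectral_constraint_def)

lemma spectral_constraint_sum_norm_sq_dual:
  assumes "\<Omega> \<subset> {..<L}" and "spectral_constraint L \<Omega> c"
  shows "(\<Sum>k<L. (cmod (dual L c k))\<^sup>2) = real L"
proof -
  have "card \<Omega> < L"
    using psubset_card_mono[OF finite_lessThan assms(1)] by simp
  have "(\<Sum>k<L. (cmod (dual L c k))\<^sup>2) = (\<Sum>k<L. if k \<in> \<Omega> then 0 else real L / (real L - real (card \<Omega>)))"
    using assms(2) by (intro sum.cong) (simp_all add: spectral_constraint_norm_sq_dual)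
  also have "\<dots> = real L"
    using assms(1) \<open>card \<Omega> < L\<close> by (simp add: sum_lessThan_if_mem_zero)
  finally show ?thesis .
qed

lemma spectral_constraint_sum_norm_sq_dual_mult:
  assumes "\<Omega> \<subset> {..<L}" and "spectral_constraint L \<Omega> c" and "spectral_constraint L \<Omega> d"
  shows "(\<Sum>k<L. (cmod (dual L c k))\<^sup>2 * (cmod (dual L d k))\<^sup>2) = (real L)\<^sup>2 / (real L - real (card \<Omega>))"
proof -
  have "card \<Omega> < L"
    using psubset_card_mono[OF finite_lessThan assms(1)] by simp
  have "(\<Sum>k<L. (cmod (dual L c k))\<^sup>2 * (cmod (dual L d k))\<^sup>2) =
      (\<Sum>k<L. if k \<in> \<Omega> then 0 else real L / (real L - real (card \<Omega>)) * (real L / (real L - real (card \<Omega>))))"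
    using assms(2,3) by (intro sum.cong) (simp_all add: spectral_constraint_norm_sq_dual)
  also have "\<dots> = (real L)\<^sup>2 / (real L - real (card \<Omega>))"
    using assms(1) \<open>card \<Omega> < L\<close> by (simp add: sum_lessThan_if_mem_zero power2_eq_square)
  finally show ?thesis .
qed

lemma sum_norm_sq_pcorr_spectral_constraint:
  assumes "\<Omega> \<subset> {..<L}" and "spectral_constraint L \<Omega> c" and "spectral_constraint L \<Omega> d"
  shows "(\<Sum>\<tau><L. (cmod (pcorr L c d \<tau>))\<^sup>2) = real L ^ 3 / (real L - real (card \<Omega>))"
proof -
  have "L > 0" using assms(1) by (cases L) auto
  then show ?thesis
    unfolding sum_norm_sq_pcorr[OF \<open>L > 0\<close>] spectral_constraint_sum_norm_sq_dual_mult[OF assms]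
    by (simp add: power2_eq_square power3_eq_cube)
qed

lemma autocorrelation_lower_bound:
  assumes "L \<ge> 2" and "\<Omega> \<subset> {..<L}" and "spectral_constraint L \<Omega> c"
    and bound: "\<And>\<tau>. 0 < \<tau> \<Longrightarrow> \<tau> < L \<Longrightarrow> cmod (pcorr L c c \<tau>) \<le> T"
  shows "real L * sqrt (real (card \<Omega>) / ((real L - real (card \<Omega>)) * (real L - 1))) \<le> T"
proof -
  define n where "n = card \<Omega>"
  have "n < L"
    unfolding n_def using psubset_card_mono[OF finite_lessThan assms(2)] by simp
  have "L > 0" using assms(1) by simp
  have "0 \<le> T" using bound[of 1] assms(1) norm_ge_zero[of "pcorr L c c 1"] by linarith
  have "real L ^ 3 / (real L - real n) = (\<Sum>\<tau><L. (cmod (pcorr L c c \<tau>))\<^sup>2)"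
    unfolding n_def by (rule sum_norm_sq_pcorr_spectral_constraint[OF assms(2,3,3), symmetric])
  also have "\<dots> = (cmod (pcorr L c c 0))\<^sup>2 + (\<Sum>\<tau>\<in>{..<L} - {0}. (cmod (pcorr L c c \<tau>))\<^sup>2)"
    using \<open>L > 0\<close> by (simp add: sum.remove)
  also have "\<dots> \<le> (real L)\<^sup>2 + (real L - 1) * T\<^sup>2"
  proof -
    have "(\<Sum>\<tau>\<in>{..<L} - {0}. (cmod (pcorr L c c \<tau>))\<^sup>2) \<le> real (card ({..<L} - {0})) * T\<^sup>2"
      by (intro sum_bounded_above power_mono bound) auto
    moreover have "cmod (pcorr L c c 0) = real L"
      using assms(2,3) by (simp add: pcorr_self_zero[OF \<open>L > 0\<close>] spectral_constraint_sum_norm_sq_dual)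
    ultimately show ?thesis using \<open>L > 0\<close> by (simp add: of_nat_diff)
  qed
  finally have "real L ^ 3 / (real L - real n) - (real L)\<^sup>2 \<le> (real L - 1) * T\<^sup>2"
    by simp
  moreover have "real L ^ 3 / (real L - real n) - (real L)\<^sup>2 = (real L)\<^sup>2 * real n / (real L - real n)"
    using \<open>n < L\<close> by (simp add: field_simps power2_eq_square power3_eq_cube)
  ultimately have "(real L)\<^sup>2 * real n / (real L - real n) \<le> (real L - 1) * T\<^sup>2"
    by linarith
  then have "(real L)\<^sup>2 * real n / (real L - real n) / (real L - 1) \<le> T\<^sup>2"
    using assms(1) by (subst pos_divide_le_eq) (auto simp: mult.commute)
  then have "(real L)\<^sup>2 * (real n / ((real L - real n) * (real L - 1))) \<le> T\<^sup>2"
    by (simp add: divide_divide_eq_left)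
  then have "sqrt ((real L)\<^sup>2 * (real n / ((real L - real n) * (real L - 1)))) \<le> T"
    using \<open>0 \<le> T\<close> real_le_lsqrt by blast
  then show ?thesis
    unfolding real_sqrt_mult n_def by simp
qed

lemma crosscorrelation_lower_bound:
  assumes "\<Omega> \<subset> {..<L}" and "spectral_constraint L \<Omega> c" and "spectral_constraint L \<Omega> d"
    and bound: "\<And>\<tau>. \<tau> < L \<Longrightarrow> cmod (pcorr L c d \<tau>) \<le> T"
  shows "real L / sqrt (real L - real (card \<Omega>)) \<le> T"
proof -
  have "L > 0" using assms(1) by (cases L) auto
  have "0 \<le> T" using bound[of 0] \<open>L > 0\<close> norm_ge_zero[of "pcorr L c d 0"] by linarith
  have "real L ^ 3 / (real L - real (card \<Omega>)) = (\<Sum>\<tau><L. (cmod (pcorr L c d \<tau>))\<^sup>2)"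
    by (rule sum_norm_sq_pcorr_spectral_constraint[OF assms(1-3), symmetric])
  also have "\<dots> \<le> real L * T\<^sup>2"
    using sum_bounded_above[of "{..<L}" "\<lambda>\<tau>. (cmod (pcorr L c d \<tau>))\<^sup>2" "T\<^sup>2"] bound
    by (simp add: power_mono)
  also have "real L ^ 3 / (real L - real (card \<Omega>)) = real L * ((real L)\<^sup>2 / (real L - real (card \<Omega>)))"
    by (simp add: power2_eq_square power3_eq_cube)
  finally have "(real L)\<^sup>2 / (real L - real (card \<Omega>)) \<le> T\<^sup>2"
    by (rule mult_left_le_imp_le) (use \<open>L > 0\<close> in simp)
  then have "sqrt ((real L)\<^sup>2 / (real L - real (card \<Omega>))) \<le> T"
    using \<open>0 \<le> T\<close> real_le_lsqrt by blast
  then show ?thesis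
    unfolding real_sqrt_divide by simp
qed

lemma norm_pcorr_le_theta_a:
  assumes "i < M" and "0 < \<tau>" and "\<tau> < L"
  shows "cmod (pcorr L (C i) (C i) \<tau>) \<le> theta_a L M C"
  unfolding theta_a_def by (rule Max_ge) (use assms in \<open>auto intro: finite_image_set2\<close>)

lemma norm_pcorr_le_theta_c:
  assumes "i < M" and "j < M" and "i \<noteq> j" and "\<tau> < L"
  shows "cmod (pcorr L (C i) (C j) \<tau>) \<le> theta_c L M C"
proof -
  have "{cmod (pcorr L (C i) (C j) \<tau>) | i j \<tau>. i < M \<and> j < M \<and> i \<noteq> j \<and> \<tau> < L}
      \<subseteq> (\<lambda>(i, j, \<tau>). cmod (pcorr L (C i) (C j) \<tau>)) ` ({..<M} \<times> {..<M} \<times> {..<L})"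
    by (force simp: image_iff)
  then show ?thesis
    unfolding theta_c_def by (rule Max_ge[OF finite_subset]) (use assms in auto)
qed

theorem theorem1:
  fixes L M n :: nat and \<Omega> :: "nat set" and C :: "nat \<Rightarrow> nat \<Rightarrow> complex"
  assumes "L \<ge> 2"
    and "\<Omega> \<subset> {..<L}"
    and "card \<Omega> = n"
    and "M \<ge> 1"
    and "inj_on (\<lambda>i. seq_trunc L (C i)) {..<M}"
    and "\<forall>j<M. spectral_constraint L \<Omega> (C j)"
  shows "theta_a L M C \<ge> real L * sqrt (real n / ((real L - real n) * (real L - 1))) \<and>
         (M \<ge> 2 \<longrightarrow> theta_c L M C \<ge> real L / sqrt (real L - real n))"
proof
  show "theta_a L M C \<ge> real L * sqrt (real n / ((real L - real n) * (real L - 1)))"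
    using autocorrelation_lower_bound[OF assms(1,2), of "C 0" "theta_a L M C"]
      norm_pcorr_le_theta_a[of 0 M] assms(3,4,6) by simp
  show "M \<ge> 2 \<longrightarrow> theta_c L M C \<ge> real L / sqrt (real L - real n)"
    using crosscorrelation_lower_bound[OF assms(2), of "C 0" "C 1" "theta_c L M C"]
      norm_pcorr_le_theta_c[of 0 M 1] assms(3,6) by simp
qed

end
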